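(* Let $K, M, N, d$ be positive integers, $\sigma^2>0$, $P>0$, weights $\omega_1,\ldots,\omega_K>0$, and channel matrices $\boldsymbol{H}_k\in\mathbb{C}^{N\times M}$, $k=1,\ldots,K$. For $\boldsymbol{V}=(\boldsymbol{V}_1,\ldots,\boldsymbol{V}_K)$ with $\boldsymbol{V}_k\in\mathbb{C}^{M\times d}$ and $\sum_{k=1}^K\|\boldsymbol{V}_k\|_F^2>0$, define $$\widetilde{\boldsymbol{F}}_k=\Big(\frac{\sigma^2}{P}\sum_{j=1}^K\|\boldsymbol{V}_j\|_F^2\Big)\boldsymbol{I}+\sum_{j\neq k}\boldsymbol{H}_k\boldsymbol{V}_j\boldsymbol{V}_j^{\mathrm{H}}\boldsymbol{H}_k^{\mathrm{H}}$$ and $$g(\boldsymbol{V})=\sum_{k=1}^K\omega_k\log\left|\boldsymbol{I}+\boldsymbol{V}_k^{\mathrm{H}}\boldsymbol{H}_k^{\mathrm{H}}\widetilde{\boldsymbol{F}}_k^{-1}\boldsymbol{H}_k\boldsymbol{V}_k\right|.$$ Then for any nonzero $\boldsymbol{V}$ and any nonzero scalar $c$, $g(\boldsymbol{V})=g(c\boldsymbol{V})$, and consequently $\nabla g(\boldsymbol{V})\perp\boldsymbol{V}$ for every nonzero $\boldsymbol{V}$, i.e. $\sum_{k=1}^K\Re\{\mathrm{tr}((\nabla_{\boldsymbol{V}_k} g(\boldsymbol{V}))^{\mathrm{H}}\boldsymbol{V}_k)\}=0$.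
   Context: $|\cdot|$ denotes the determinant, $\|\cdot\|_F$ the Frobenius norm, $\cdot^{\mathrm{H}}$ conjugate transpose. The gradient is taken with respect to the complex matrix variables viewed as real vectors, and orthogonality is with respect to the real inner product $\langle \boldsymbol{A},\boldsymbol{B}\rangle=\Re\{\mathrm{tr}(\boldsymbol{A}^{\mathrm{H}}\boldsymbol{B})\}$. *)

theory Defs
  imports "HOL-Analysis.Analysis"
begin

definition cadj :: "complex^'n^'m \<Rightarrow> complex^'m^'n" where
  "cadj A = (\<chi> i j. cnj (A $ j $ i))"

definition frob2 :: "complex^'n^'m \<Rightarrow> real" where
  "frob2 A = (\<Sum>i\<in>UNIV. \<Sum>j\<in>UNIV. (cmod (A $ i $ j))\<^sup>2)"

text \<open>Tuple V = (V_1,...,V_K) is V :: complex^'d^'m^'k, V $ k an M x d matrix;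
  channels H $ k are N x M matrices.\<close>
definition Ftil :: "real \<Rightarrow> real \<Rightarrow> complex^'m^'n^'k \<Rightarrow> complex^'d^'m^'k \<Rightarrow> 'k::finite
    \<Rightarrow> complex^'n^'n" where
  "Ftil \<sigma>2 P H V k =
     mat (complex_of_real (\<sigma>2 / P * (\<Sum>j\<in>UNIV. frob2 (V $ j))))
     + (\<Sum>j\<in>UNIV - {k}. H $ k ** V $ j ** cadj (V $ j) ** cadj (H $ k))"

definition gfun :: "real \<Rightarrow> real \<Rightarrow> real^'k \<Rightarrow> complex^'m^'n^'k
    \<Rightarrow> complex^'d^'m^'k::finite \<Rightarrow> real" where
  "gfun \<sigma>2 P \<omega> H V =
     (\<Sum>k\<in>UNIV. \<omega> $ k * ln (Re (det (mat 1 +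
        cadj (V $ k) ** cadj (H $ k) ** matrix_inv (Ftil \<sigma>2 P H V k) ** H $ k ** V $ k))))"

definition cscale :: "complex \<Rightarrow> complex^'d^'m^'k \<Rightarrow> complex^'d^'m^'k" where
  "cscale c V = (\<chi> k i j. c * V $ k $ i $ j)"

end

theory Submission
  imports Defs
begin

(* Replacing V by c V multiplies every interference-plus-noise matrix F_k by |c|^2: the noise
   term through the total power, the interference through the Gram matrices H_k V_j V_j^H H_k^H.
   Hence V_k^H H_k^H F_k^-1 H_k V_k, and with it g, is unchanged. So t \<mapsto> g (t V) is constant
   for t > 0, and differentiating at t = 1 gives <grad g (V), V> = 0 (Euler's relation for a
   function homogeneous of degree 0). The analytic input is that g is differentiable at V \<noteq> 0: F_k is positive definite,
   so by Cramer's rule its inverse depends smoothly on V, and det (I + S) > 0 for the positive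
   semidefinite S = V_k^H H_k^H F_k^-1 H_k V_k, so the logarithm is taken of a positive number. *)

lemma cadj_nth [simp]: "cadj A $ i $ j = cnj (A $ j $ i)"
  by (simp add: cadj_def)

lemma cadj_cadj [simp]: "cadj (cadj A) = A"
  by (simp add: vec_eq_iff)

lemma cadj_mult: "cadj (A ** B) = cadj B ** cadj A"
  by (simp add: vec_eq_iff matrix_matrix_mult_def mult.commute)

lemma cadj_add: "cadj (A + B) = cadj A + cadj B"
  by (simp add: vec_eq_iff)

lemma cadj_mat [simp]: "cadj (mat a) = mat (cnj a)"
  by (simp add: vec_eq_iff mat_def)

lemma cadj_scaleR: "cadj (r *\<^sub>R A) = r *\<^sub>R cadj A"
  by (simp add: vec_eq_iff)

lemma det_cadj: "det (cadj A) = cnj (det (A :: complex^'n^'n))"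
proof -
  have "cadj A = transpose (\<chi> i j. cnj (A $ i $ j))"
    by (simp add: vec_eq_iff transpose_def)
  then have "det (cadj A) = det (\<chi> i j. cnj (A $ i $ j))" by simp
  also have "\<dots> = cnj (det A)" by (simp add: det_def cnj_sum cnj_prod)
  finally show ?thesis .
qed

lemma inner_vec_complex: "x \<bullet> y = Re (\<Sum>i\<in>UNIV. cnj (x $ i) * y $ i)"
  by (simp add: inner_vec_def inner_complex_def Re_sum)

lemma inner_matrix_vector_mult_cadj: "x \<bullet> (A *v y) = (cadj A *v x) \<bullet> (y :: complex^_)"
proof -
  have "(\<Sum>i\<in>UNIV. cnj (x $ i) * (A *v y) $ i)
      = (\<Sum>i\<in>UNIV. \<Sum>j\<in>UNIV. cnj (x $ i) * A $ i $ j * y $ j)"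
    by (simp add: matrix_vector_mult_def sum_distrib_left mult_ac)
  also have "\<dots> = (\<Sum>j\<in>UNIV. \<Sum>i\<in>UNIV. cnj (x $ i) * A $ i $ j * y $ j)"
    by (rule sum.swap)
  also have "\<dots> = (\<Sum>j\<in>UNIV. cnj ((cadj A *v x) $ j) * y $ j)"
    by (simp add: matrix_vector_mult_def sum_distrib_left sum_distrib_right cnj_sum mult_ac)
  finally show ?thesis by (simp add: inner_vec_complex)
qed

lemma norm_power2_vec: "(norm x)\<^sup>2 = (\<Sum>i\<in>UNIV. (norm (x $ i))\<^sup>2)"
  by (simp add: norm_vec_def L2_set_def sum_nonneg)

lemma scaleR_matrix_vector_mult: "(r *\<^sub>R A) *v x = r *\<^sub>R (A *v x :: 'a::real_algebra_1^_)"
  by (simp add: vec_eq_iff matrix_vector_mult_def scaleR_sum_right)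

lemma mat_of_real_matrix_vector_mult: "mat (of_real r) *v x = r *\<^sub>R (x :: 'a::real_algebra_1^_)"
  by (simp add: vec_eq_iff matrix_vector_mult_def mat_def if_distrib if_distribR cong: if_cong)
     (simp add: scaleR_conv_of_real)

lemma matrix_inv_right: "invertible A \<Longrightarrow> A ** matrix_inv A = mat 1"
  and matrix_inv_left: "invertible A \<Longrightarrow> matrix_inv A ** A = mat 1"
  unfolding invertible_def matrix_inv_def by (metis (mono_tags, lifting) someI_ex)+

lemma matrix_inv_unique:
  assumes "A ** B = mat 1" "B ** A = mat 1"
  shows "matrix_inv A = B"
proof -
  have "invertible A" using assms invertible_def by blast
  then have "matrix_inv A = matrix_inv A ** (A ** B)" by (simp add: assms)
  also have "\<dots> = B" by (simp add: matrix_mul_assoc matrix_inv_left \<open>invertible A\<close>)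
  finally show ?thesis .
qed

lemma matrix_inv_scaleR:
  fixes A :: "'a::real_algebra_1^'n^'n"
  assumes "invertible A" "r \<noteq> 0"
  shows "matrix_inv (r *\<^sub>R A) = inverse r *\<^sub>R matrix_inv A"
  by (rule matrix_inv_unique)
     (simp_all add: matrix_scalar_ac flip: scalar_matrix_assoc add: matrix_inv_left matrix_inv_right assms)

lemma cadj_matrix_inv:
  assumes "invertible (A :: complex^'n^'n)"
  shows "cadj (matrix_inv A) = matrix_inv (cadj A)"
  using matrix_inv_left[OF assms] matrix_inv_right[OF assms]
  by (intro matrix_inv_unique[symmetric]) (metis cadj_mult cadj_mat complex_cnj_one)+

lemma matrix_inv_cramer:
  fixes A :: "'c::field^'n^'n"
  assumes "det A \<noteq> 0"
  shows "matrix_inv A $ k $ j = det (\<chi> i l. if l = k then (if i = j then 1 else 0) else A $ i $ l) / det A"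
proof -
  let ?b = "(\<chi> i. if i = j then 1 else 0) :: 'c^'n"
  have "A ** matrix_inv A = mat 1"
    using assms by (simp add: matrix_inv_right invertible_det_nz)
  then have "A *v (\<chi> l. matrix_inv A $ l $ j) = ?b"
    by (simp add: vec_eq_iff matrix_vector_mult_def matrix_matrix_mult_def mat_def)
  then have "(\<chi> l. matrix_inv A $ l $ j)
      = (\<chi> k. det (\<chi> i l. if l = k then ?b $ i else A $ i $ l) / det A)"
    using cramer[OF assms] by blast
  then show ?thesis
    by (simp add: vec_eq_iff cong: if_cong)
qed

(* On complex vectors x \<bullet> y = Re (x^H y), so this is the usual notion for a Hermitian matrix. *)
definition psd_matrix :: "complex^'n^'n \<Rightarrow> bool" where
  "psd_matrix A \<longleftrightarrow> cadj A = A \<and> (\<forall>x. 0 \<le> x \<bullet> (A *v x))"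

lemma psd_matrix_zero: "psd_matrix 0"
  by (simp add: psd_matrix_def vec_eq_iff)

lemma psd_matrix_add: "psd_matrix A \<Longrightarrow> psd_matrix B \<Longrightarrow> psd_matrix (A + B)"
  by (simp add: psd_matrix_def cadj_add matrix_vector_mult_add_rdistrib inner_add_right add_nonneg_nonneg)

lemma psd_matrix_sum: "(\<And>j. j \<in> S \<Longrightarrow> psd_matrix (A j)) \<Longrightarrow> psd_matrix (\<Sum>j\<in>S. A j)"
  by (induction S rule: infinite_finite_induct) (simp_all add: psd_matrix_zero psd_matrix_add)

lemma psd_matrix_scaleR: "0 \<le> r \<Longrightarrow> psd_matrix A \<Longrightarrow> psd_matrix (r *\<^sub>R A)"
  by (simp add: psd_matrix_def cadj_scaleR scaleR_matrix_vector_mult)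

lemma psd_matrix_mat_of_real: "0 \<le> r \<Longrightarrow> psd_matrix (mat (of_real r))"
  by (simp add: psd_matrix_def mat_of_real_matrix_vector_mult)

lemma psd_matrix_congruence:
  assumes "psd_matrix A"
  shows "psd_matrix (cadj B ** A ** B)"
  unfolding psd_matrix_def
proof
  show "cadj (cadj B ** A ** B) = cadj B ** A ** B"
    using assms by (simp add: psd_matrix_def cadj_mult matrix_mul_assoc)
  show "\<forall>x. 0 \<le> x \<bullet> ((cadj B ** A ** B) *v x)"
  proof
    fix x
    have "x \<bullet> ((cadj B ** A ** B) *v x) = x \<bullet> (cadj B *v (A *v (B *v x)))"
      by (simp add: matrix_vector_mul_assoc matrix_mul_assoc)
    also have "\<dots> = (B *v x) \<bullet> (A *v (B *v x))"
      by (simp add: inner_matrix_vector_mult_cadj)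
    finally have "x \<bullet> ((cadj B ** A ** B) *v x) = (B *v x) \<bullet> (A *v (B *v x))" .
    with assms show "0 \<le> x \<bullet> ((cadj B ** A ** B) *v x)"
      by (simp add: psd_matrix_def)
  qed
qed

lemma psd_matrix_gram: "psd_matrix (B ** cadj B)"
proof -
  have "psd_matrix (cadj (cadj B) ** mat 1 ** cadj B)"
    by (rule psd_matrix_congruence) (simp add: psd_matrix_def)
  then show ?thesis by simp
qed

lemma psd_matrix_inv:
  assumes "psd_matrix A" "invertible A"
  shows "psd_matrix (matrix_inv A)"
  unfolding psd_matrix_def
proof
  show "cadj (matrix_inv A) = matrix_inv A"
    using assms by (simp add: cadj_matrix_inv psd_matrix_def)
  show "\<forall>x. 0 \<le> x \<bullet> (matrix_inv A *v x)"
  proof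
    fix x
    define z where "z = matrix_inv A *v x"
    have "x = A *v z"
      by (simp add: z_def matrix_vector_mul_assoc matrix_inv_right assms(2))
    then have "x \<bullet> (matrix_inv A *v x) = z \<bullet> (A *v z)"
      by (simp add: z_def inner_commute)
    with assms(1) show "0 \<le> x \<bullet> (matrix_inv A *v x)"
      by (simp add: psd_matrix_def)
  qed
qed

lemma invertible_of_real_plus_psd:
  assumes "0 < r" "psd_matrix Y"
  shows "invertible (mat (of_real r) + Y)"
proof -
  have "x = 0" if "(mat (of_real r) + Y) *v x = 0" for x
  proof -
    have "r * (x \<bullet> x) \<le> x \<bullet> ((mat (of_real r) + Y) *v x)"
      using assms(2)
      by (simp add: psd_matrix_def matrix_vector_mult_add_rdistrib inner_add_right
          mat_of_real_matrix_vector_mult)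
    with that have "r * (x \<bullet> x) \<le> 0" by simp
    with assms(1) show "x = 0"
      by (metis inner_eq_zero_iff inner_ge_zero mult_le_0_iff order.antisym not_less)
  qed
  then show ?thesis
    by (simp add: invertible_left_inverse matrix_left_invertible_ker)
qed

lemma det_one_plus_psd_pos:
  assumes "psd_matrix Y"
  shows "0 < Re (det (mat 1 + Y))"
proof -
  define f where "f t = det (mat 1 + t *\<^sub>R Y)" for t :: real
  have nonzero: "f t \<noteq> 0" if "0 \<le> t" for t
    using invertible_of_real_plus_psd[OF zero_less_one psd_matrix_scaleR[OF that assms]]
    by (simp add: f_def invertible_det_nz)
  have real: "Im (f t) = 0" for t
  proof -
    have "cadj (mat 1 + t *\<^sub>R Y) = mat 1 + t *\<^sub>R Y"
      using assms by (simp add: psd_matrix_def cadj_add cadj_scaleR)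
    then have "cnj (f t) = f t"
      unfolding f_def by (metis det_cadj)
    then show ?thesis
      by (simp add: complex_eq_iff)
  qed
  have "continuous_on UNIV f"
    unfolding f_def det_def by (auto intro!: continuous_intros)
  then have "isCont (\<lambda>t. Re (f t)) t" for t
    by (auto intro!: continuous_intros simp: continuous_on_eq_continuous_at)
  moreover have "Re (f 0) = 1"
    by (simp add: f_def)
  \<comment> \<open>A real, continuous, nonvanishing path from 1 cannot reach a nonpositive value.\<close>
  ultimately have "0 < Re (f 1)"
    using IVT2[of "\<lambda>t. Re (f t)" 1 0 0] nonzero real
    by (metis complex_eq_iff zero_complex.simps not_less order.refl zero_le_one)
  then show ?thesis
    by (simp add: f_def)
qed

definition entrywise_differentiable ::
    "('a::real_normed_vector \<Rightarrow> 'c::real_normed_field^'n^'m) \<Rightarrow> 'a \<Rightarrow> bool" where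
  "entrywise_differentiable A x \<longleftrightarrow> (\<forall>i j. (\<lambda>v. A v $ i $ j) differentiable (at x))"

lemma entrywise_differentiable_const: "entrywise_differentiable (\<lambda>v. C) x"
  by (simp add: entrywise_differentiable_def)

lemma entrywise_differentiable_add:
  "entrywise_differentiable A x \<Longrightarrow> entrywise_differentiable B x \<Longrightarrow>
    entrywise_differentiable (\<lambda>v. A v + B v) x"
  by (simp add: entrywise_differentiable_def)

lemma entrywise_differentiable_sum:
  "(\<And>j. j \<in> S \<Longrightarrow> entrywise_differentiable (A j) x) \<Longrightarrow>
    entrywise_differentiable (\<lambda>v. \<Sum>j\<in>S. A j v) x"
  by (induction S rule: infinite_finite_induct)
     (simp_all add: entrywise_differentiable_const entrywise_differentiable_add)

lemma entrywise_differentiable_mult: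
  "entrywise_differentiable A x \<Longrightarrow> entrywise_differentiable B x \<Longrightarrow>
    entrywise_differentiable (\<lambda>v. A v ** B v) x"
  by (simp add: entrywise_differentiable_def matrix_matrix_mult_def)

lemma entrywise_differentiable_cadj:
  "entrywise_differentiable A x \<Longrightarrow> entrywise_differentiable (\<lambda>v. cadj (A v)) x"
  by (simp add: entrywise_differentiable_def differentiable_cnj_iff)

lemma entrywise_differentiable_mat:
  "f differentiable (at x) \<Longrightarrow> entrywise_differentiable (\<lambda>v. mat (f v)) x"
  unfolding entrywise_differentiable_def mat_def by (intro allI, case_tac "i = j") auto

lemma entrywise_differentiable_vec_nth:
  "entrywise_differentiable (\<lambda>V :: 'c::real_normed_field^'n^'m^'k. V $ k) x"
  unfolding entrywise_differentiable_def
  by (intro allI bounded_linear_imp_differentiable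
      bounded_linear_compose[OF bounded_linear_vec_nth] bounded_linear_vec_nth)

lemma differentiable_prod:
  fixes f :: "'i \<Rightarrow> 'a::real_normed_vector \<Rightarrow> 'c::real_normed_field"
  shows "(\<And>i. i \<in> S \<Longrightarrow> f i differentiable (at x)) \<Longrightarrow>
    (\<lambda>v. \<Prod>i\<in>S. f i v) differentiable (at x)"
  by (induction S rule: infinite_finite_induct) auto

lemma differentiable_det:
  "entrywise_differentiable A x \<Longrightarrow> (\<lambda>v. det (A v)) differentiable (at x)"
  unfolding entrywise_differentiable_def det_def
  by (intro differentiable_sum differentiable_mult differentiable_prod differentiable_const ballI) auto

lemma entrywise_differentiable_matrix_inv:
  assumes A: "entrywise_differentiable A x" and det: "det (A x) \<noteq> 0"
  shows "entrywise_differentiable (\<lambda>v. matrix_inv (A v :: 'c::real_normed_field^'n^'n)) x"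
  unfolding entrywise_differentiable_def
proof (intro allI)
  fix k j
  let ?minor = "\<lambda>v. (\<chi> i l. if l = k then (if i = j then 1 else 0) else A v $ i $ l) :: 'c^'n^'n"
  have "entrywise_differentiable ?minor x"
    unfolding entrywise_differentiable_def
  proof (intro allI)
    fix i l
    show "(\<lambda>v. ?minor v $ i $ l) differentiable (at x)"
      using A by (cases "l = k") (auto simp: entrywise_differentiable_def)
  qed
  then have "(\<lambda>v. det (?minor v) / det (A v)) differentiable (at x)"
    using det by (intro differentiable_divide differentiable_det A)
  \<comment> \<open>The function matrix_inv is defined by choice, but near x it agrees with Cramer's formula.\<close>
  then obtain D where D: "((\<lambda>v. det (?minor v) / det (A v)) has_derivative D) (at x)"
    by (auto simp: differentiable_def)
  have "isCont (\<lambda>v. det (A v)) x"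
    by (rule differentiable_imp_continuous_within[OF differentiable_det[OF A]])
  then have "\<forall>\<^sub>F v in at x. det (A v) \<noteq> 0"
    unfolding isCont_def using det by (rule tendsto_imp_eventually_ne)
  then have near: "\<forall>\<^sub>F v in at x. det (?minor v) / det (A v) = matrix_inv (A v) $ k $ j"
    by eventually_elim (rule matrix_inv_cramer[symmetric])
  have "((\<lambda>v. matrix_inv (A v) $ k $ j) has_derivative D) (at x)"
    by (rule has_derivative_transform_eventually[OF D near]) (simp_all add: matrix_inv_cramer det)
  then show "(\<lambda>v. matrix_inv (A v) $ k $ j) differentiable (at x)"
    by (auto simp: differentiable_def)
qed

lemma linear_real_eq_inner_adjoint:
  fixes D :: "'a::euclidean_space \<Rightarrow> real"
  assumes "linear D"
  shows "D h = adjoint D 1 \<bullet> h"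
  using adjoint_works[OF assms, of h 1] by (simp add: inner_commute)

lemma has_derivative_zero_if_scale_invariant:
  fixes f :: "'a::real_normed_vector \<Rightarrow> real"
  assumes D: "(f has_derivative D) (at x)" and inv: "\<And>t. 0 < t \<Longrightarrow> f (t *\<^sub>R x) = f x"
  shows "D x = 0"
proof -
  have "((\<lambda>t. t *\<^sub>R x) has_derivative (\<lambda>t. t *\<^sub>R x)) (at 1)"
    by (auto intro!: derivative_eq_intros)
  moreover have "(f has_derivative D) (at (1 *\<^sub>R x))"
    using D by simp
  ultimately have "((\<lambda>t. f (t *\<^sub>R x)) has_derivative (\<lambda>t. D (t *\<^sub>R x))) (at 1)"
    by (rule has_derivative_compose)
  then have "((\<lambda>t. f x) has_derivative (\<lambda>t. D (t *\<^sub>R x))) (at 1)"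
    by (rule has_derivative_transform_within_open[where s="{0<..}"]) (simp_all add: inv)
  then have "(\<lambda>t. D (t *\<^sub>R x)) = (\<lambda>t. 0)"
    using has_derivative_unique has_derivative_const by blast
  then show ?thesis
    by (metis scaleR_one)
qed

lemma frob2_eq_norm_power2: "frob2 A = (norm A)\<^sup>2"
  by (simp add: frob2_def norm_power2_vec)

lemma sum_frob2_eq_norm_power2: "(\<Sum>j\<in>UNIV. frob2 (V $ j)) = (norm V)\<^sup>2"
  by (simp add: frob2_eq_norm_power2 norm_power2_vec)

lemma Ftil_eq:
  "Ftil \<sigma>2 P H V k = mat (of_real (\<sigma>2 / P * (norm V)\<^sup>2))
     + (\<Sum>j\<in>UNIV - {k}. (H $ k ** V $ j) ** cadj (H $ k ** V $ j))"
  by (simp add: Ftil_def sum_frob2_eq_norm_power2 cadj_mult matrix_mul_assoc)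

lemma invertible_Ftil:
  assumes "\<sigma>2 > 0" "P > 0" "V \<noteq> 0"
  shows "invertible (Ftil \<sigma>2 P H V k)"
  unfolding Ftil_eq using assms
  by (intro invertible_of_real_plus_psd psd_matrix_sum psd_matrix_gram) simp

lemma psd_Ftil:
  assumes "\<sigma>2 > 0" "P > 0"
  shows "psd_matrix (Ftil \<sigma>2 P H V k)"
  unfolding Ftil_eq using assms
  by (intro psd_matrix_add psd_matrix_mat_of_real psd_matrix_sum psd_matrix_gram) simp

definition sinr_matrix :: "real \<Rightarrow> real \<Rightarrow> complex^'m^'n^'k \<Rightarrow> complex^'d^'m^'k \<Rightarrow> 'k::finite
    \<Rightarrow> complex^'d^'d" where
  "sinr_matrix \<sigma>2 P H V k =
     cadj (V $ k) ** cadj (H $ k) ** matrix_inv (Ftil \<sigma>2 P H V k) ** H $ k ** V $ k"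

lemma gfun_eq_sum_sinr_matrix:
  "gfun \<sigma>2 P \<omega> H V = (\<Sum>k\<in>UNIV. \<omega> $ k * ln (Re (det (mat 1 + sinr_matrix \<sigma>2 P H V k))))"
  by (simp add: gfun_def sinr_matrix_def)

lemma psd_sinr_matrix:
  assumes "\<sigma>2 > 0" "P > 0" "V \<noteq> 0"
  shows "psd_matrix (sinr_matrix \<sigma>2 P H V k)"
proof -
  have "sinr_matrix \<sigma>2 P H V k = cadj (H $ k ** V $ k) ** matrix_inv (Ftil \<sigma>2 P H V k) ** (H $ k ** V $ k)"
    by (simp add: sinr_matrix_def cadj_mult matrix_mul_assoc)
  then show ?thesis
    using assms by (simp add: psd_matrix_congruence psd_matrix_inv psd_Ftil invertible_Ftil)
qed

(* Only real scalars act on complex matrices via *\<^sub>R. *)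
definition scaleC_mat :: "complex \<Rightarrow> complex^'n^'m \<Rightarrow> complex^'n^'m" where
  "scaleC_mat c A = (\<chi> i j. c * A $ i $ j)"

lemma cscale_nth: "cscale c V $ k = scaleC_mat c (V $ k)"
  by (simp add: vec_eq_iff cscale_def scaleC_mat_def)

lemma scaleC_mat_mult_left: "scaleC_mat c A ** B = scaleC_mat c (A ** B)"
  by (simp add: vec_eq_iff scaleC_mat_def matrix_matrix_mult_def sum_distrib_left mult_ac)

lemma scaleC_mat_mult_right: "A ** scaleC_mat c B = scaleC_mat c (A ** B)"
  by (simp add: vec_eq_iff scaleC_mat_def matrix_matrix_mult_def sum_distrib_left mult_ac)

lemma scaleC_mat_scaleC_mat: "scaleC_mat a (scaleC_mat b A) = scaleC_mat (a * b) A"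
  by (simp add: vec_eq_iff scaleC_mat_def mult_ac)

lemma scaleC_mat_of_real: "scaleC_mat (of_real r) A = r *\<^sub>R A"
  by (simp add: vec_eq_iff scaleC_mat_def) (simp add: scaleR_conv_of_real)

lemma scaleC_mat_one: "scaleC_mat 1 A = A"
  by (simp add: vec_eq_iff scaleC_mat_def)

lemma cadj_scaleC_mat: "cadj (scaleC_mat c A) = scaleC_mat (cnj c) (cadj A)"
  by (simp add: vec_eq_iff scaleC_mat_def)

lemma frob2_scaleC_mat: "frob2 (scaleC_mat c A) = (cmod c)\<^sup>2 * frob2 A"
  by (simp add: frob2_def scaleC_mat_def sum_distrib_left norm_mult power_mult_distrib)

lemma cscale_of_real: "cscale (of_real t) V = t *\<^sub>R V"
  by (simp add: vec_eq_iff cscale_def) (simp add: scaleR_conv_of_real)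

lemma Ftil_cscale:
  "Ftil \<sigma>2 P H (cscale c V) k = (cmod c)\<^sup>2 *\<^sub>R Ftil \<sigma>2 P H V k"
proof -
  have "cnj c * c = of_real ((cmod c)\<^sup>2)"
    by (metis complex_norm_square mult.commute)
  then have gram: "H $ k ** cscale c V $ j ** cadj (cscale c V $ j) ** cadj (H $ k)
      = (cmod c)\<^sup>2 *\<^sub>R (H $ k ** V $ j ** cadj (V $ j) ** cadj (H $ k))" for j
    by (simp add: cscale_nth cadj_scaleC_mat scaleC_mat_mult_left scaleC_mat_mult_right
        scaleC_mat_scaleC_mat flip: scaleC_mat_of_real del: of_real_power)
  have noise: "mat (of_real (\<sigma>2 / P * (\<Sum>j\<in>UNIV. frob2 (cscale c V $ j))))
      = (cmod c)\<^sup>2 *\<^sub>R (mat (of_real (\<sigma>2 / P * (\<Sum>j\<in>UNIV. frob2 (V $ j)))) :: complex^'n^'n)"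
    by (simp add: cscale_nth frob2_scaleC_mat vec_eq_iff mat_def flip: sum_distrib_left)
       (simp add: scaleR_conv_of_real mult_ac)
  show ?thesis
    unfolding Ftil_def gram noise by (simp add: scaleR_add_right scaleR_sum_right)
qed

lemma sinr_matrix_cscale:
  assumes "\<sigma>2 > 0" "P > 0" "V \<noteq> 0" "c \<noteq> 0"
  shows "sinr_matrix \<sigma>2 P H (cscale c V) k = sinr_matrix \<sigma>2 P H V k"
proof -
  have unit: "c * (of_real (inverse ((cmod c)\<^sup>2)) * cnj c) = 1"
    using assms(4) by (simp add: field_simps complex_norm_square del: of_real_power)
  have "matrix_inv (Ftil \<sigma>2 P H (cscale c V) k)
      = scaleC_mat (of_real (inverse ((cmod c)\<^sup>2))) (matrix_inv (Ftil \<sigma>2 P H V k))"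
    using assms by (simp add: Ftil_cscale matrix_inv_scaleR invertible_Ftil scaleC_mat_of_real
        del: of_real_power of_real_inverse)
  then show ?thesis
    unfolding sinr_matrix_def
    by (simp add: cscale_nth cadj_scaleC_mat scaleC_mat_mult_left scaleC_mat_mult_right
        scaleC_mat_scaleC_mat unit scaleC_mat_one del: of_real_power of_real_inverse)
qed

lemma gfun_cscale:
  assumes "\<sigma>2 > 0" "P > 0" "V \<noteq> 0" "c \<noteq> 0"
  shows "gfun \<sigma>2 P \<omega> H (cscale c V) = gfun \<sigma>2 P \<omega> H V"
  using assms by (simp add: gfun_eq_sum_sinr_matrix sinr_matrix_cscale)

lemma entrywise_differentiable_Ftil: "entrywise_differentiable (\<lambda>V. Ftil \<sigma>2 P H V k) x"
proof -
  have "(\<lambda>V. V \<bullet> V) differentiable (at x)"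
    by (rule differentiableI[OF has_derivative_inner[OF has_derivative_ident has_derivative_ident]])
  then have "(\<lambda>V. of_real (\<sigma>2 / P * (norm V)\<^sup>2) :: complex) differentiable (at x)"
    unfolding of_real_def power2_norm_eq_inner
    by (intro differentiable_scaleR differentiable_mult differentiable_const)
  then show ?thesis
    unfolding Ftil_eq
    by (intro entrywise_differentiable_add entrywise_differentiable_mat entrywise_differentiable_sum
        entrywise_differentiable_mult entrywise_differentiable_cadj entrywise_differentiable_const
        entrywise_differentiable_vec_nth)
qed

lemma differentiable_gfun:
  assumes "\<sigma>2 > 0" "P > 0" "V \<noteq> 0"
  shows "gfun \<sigma>2 P \<omega> H differentiable (at V)"
proof -
  have "(\<lambda>W. \<omega> $ k * ln (Re (det (mat 1 + sinr_matrix \<sigma>2 P H W k)))) differentiable (at V)" for k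
  proof -
    have "det (Ftil \<sigma>2 P H V k) \<noteq> 0"
      using invertible_Ftil[OF assms] by (simp add: invertible_det_nz)
    then have "entrywise_differentiable (\<lambda>W. mat 1 + sinr_matrix \<sigma>2 P H W k) V"
      unfolding sinr_matrix_def
      by (intro entrywise_differentiable_add entrywise_differentiable_mult entrywise_differentiable_const
          entrywise_differentiable_cadj entrywise_differentiable_vec_nth
          entrywise_differentiable_matrix_inv entrywise_differentiable_Ftil)
    then have "(\<lambda>W. Re (det (mat 1 + sinr_matrix \<sigma>2 P H W k))) differentiable (at V)"
      by (rule differentiable_compose[OF bounded_linear_imp_differentiable[OF bounded_linear_Re]
          differentiable_det])
    moreover have "0 < Re (det (mat 1 + sinr_matrix \<sigma>2 P H V k))"
      using assms by (intro det_one_plus_psd_pos psd_sinr_matrix)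
    then have "ln differentiable (at (Re (det (mat 1 + sinr_matrix \<sigma>2 P H V k))))"
      by (rule differentiableI[OF has_field_derivative_imp_has_derivative[OF DERIV_ln]])
    ultimately show ?thesis
      by (intro differentiable_mult differentiable_const) (rule differentiable_compose)
  qed
  then show ?thesis
    unfolding gfun_eq_sum_sinr_matrix by (intro differentiable_sum) auto
qed

theorem lemma1:
  fixes \<sigma>2 P :: real and \<omega> :: "real^'k::finite"
    and H :: "complex^'m::finite^'n::finite^'k"
    and V :: "complex^'d::finite^'m^'k"
  assumes "\<sigma>2 > 0" and "P > 0" and "\<forall>k. \<omega> $ k > 0"
    and "V \<noteq> 0"
  shows "(\<forall>c::complex. c \<noteq> 0 \<longrightarrow> gfun \<sigma>2 P \<omega> H V = gfun \<sigma>2 P \<omega> H (cscale c V))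
     \<and> (\<exists>G. (gfun \<sigma>2 P \<omega> H has_derivative (\<lambda>h. G \<bullet> h)) (at V) \<and> G \<bullet> V = 0)"
proof (intro conjI allI impI)
  fix c :: complex
  assume "c \<noteq> 0"
  then show "gfun \<sigma>2 P \<omega> H V = gfun \<sigma>2 P \<omega> H (cscale c V)"
    using gfun_cscale assms(1,2,4) by metis
next
  obtain D where D: "(gfun \<sigma>2 P \<omega> H has_derivative D) (at V)"
    using differentiable_gfun[OF assms(1,2,4)] by (auto simp: differentiable_def)
  have "D V = 0"
  proof (rule has_derivative_zero_if_scale_invariant[OF D])
    fix t :: real
    assume "0 < t"
    then show "gfun \<sigma>2 P \<omega> H (t *\<^sub>R V) = gfun \<sigma>2 P \<omega> H V"
      using gfun_cscale[OF assms(1,2,4), of "of_real t"] by (simp add: cscale_of_real)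
  qed
  moreover have "D = (\<lambda>h. adjoint D 1 \<bullet> h)"
    using linear_real_eq_inner_adjoint[OF has_derivative_linear[OF D]] by blast
  ultimately show "\<exists>G. (gfun \<sigma>2 P \<omega> H has_derivative (\<lambda>h. G \<bullet> h)) (at V) \<and> G \<bullet> V = 0"
    using D by metis
qed

end
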